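(* Let $c$ be an irrational number for which there exist integers $p_n$ and $q_n\to\infty$ with $0<c-\frac{p_n}{q_n}$ and $q_n^2\left(c-\frac{p_n}{q_n}\right)\to0$. Let $T_t(x,y)=(\{x+t\},\{y+ct\})$ be the winding (linear flow) of the torus $M=[0,1)^2$ along the vector $(1,c)$, with Lebesgue measure, and let $\varphi:(0,\infty)\to(0,\infty)$ satisfy $\varphi(t)\to0$ as $t\to+\infty$. Then there exists a continuous function $f$ on the torus with $\int_M f=0$ such that for almost every $(x,y)\in M$ $$\limsup_{t\to+\infty}\frac{1}{\varphi(t)}|A(f,t,(x,y))|=+\infty.$$
   Context: $\{s\}$ denotes the fractional part of $s$. Birkhoff average: $A(f,t,z)=\frac1t\int_0^t f(T_sz)\,ds$. *)

theory Defs
  imports "HOL-Analysis.Analysis"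
begin

definition torus_flow :: "real \<Rightarrow> real \<Rightarrow> real \<times> real \<Rightarrow> real \<times> real" where
  "torus_flow c t z = (frac (fst z + t), frac (snd z + c * t))"

definition birkhoff_avg :: "real \<Rightarrow> (real \<times> real \<Rightarrow> real) \<Rightarrow> real \<Rightarrow> real \<times> real \<Rightarrow> real" where
  "birkhoff_avg c f t z = (1 / t) * integral {0..t} (\<lambda>s. f (torus_flow c s z))"

text \<open>Continuous functions on the torus: continuous 1-periodic functions on the plane.\<close>
definition torus_continuous :: "(real \<times> real \<Rightarrow> real) \<Rightarrow> bool" where
  "torus_continuous f \<longleftrightarrow> continuous_on UNIV f \<and>
     (\<forall>x y. f (x + 1, y) = f (x, y) \<and> f (x, y + 1) = f (x, y))"

end

theory Submission
  imports Defs
begin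

(* The function is a lacunary cosine series f(x,y) = sum_k 10^-k cos 2pi(Q_k y - P_k x), where
   (P_k, Q_k) is a rapidly thinned subsequence of the approximations (p_n, q_n). Along the flow the
   k-th term oscillates with frequency w_k = 2pi(Q_k c - P_k) > 0, and w_k -> 0 because
   q_n (c - p_n/q_n) -> 0. Its Birkhoff average is (sin(th_k + w_k t) - sin th_k) / (w_k t).
   At one of the times t = pi/w_m, pi/(2 w_m) the m-th average is at least 1/6 in absolute value,
   while the faster terms k < m have averaged out to O(w_m/w_k) and the slower terms k > m are
   bounded by their weights; so |A(f,t,z)| >= 10^-m/25 at a time t of order 1/w_m, for every z.
   Thinning the subsequence so that phi < 10^-m/(25(m+1)) beyond that time makes the limsup
   infinite everywhere, not only almost everywhere. *)

lemma uniform_limit_bounded_series: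
  fixes g :: "nat \<Rightarrow> 'a \<Rightarrow> real"
  assumes a: "summable (\<lambda>k. \<bar>a k\<bar>)" and g: "\<And>k x. x \<in> S \<Longrightarrow> \<bar>g k x\<bar> \<le> 1"
  shows "uniform_limit S (\<lambda>n x. \<Sum>k<n. a k * g k x) (\<lambda>x. \<Sum>k. a k * g k x) sequentially"
  by (rule Weierstrass_m_test[OF _ a]) (auto simp: abs_mult intro!: mult_left_le g)

lemma continuous_on_bounded_series:
  fixes g :: "nat \<Rightarrow> 'a::topological_space \<Rightarrow> real"
  assumes "summable (\<lambda>k. \<bar>a k\<bar>)" "\<And>k x. x \<in> S \<Longrightarrow> \<bar>g k x\<bar> \<le> 1"
    and "\<And>k. continuous_on S (g k)"
  shows "continuous_on S (\<lambda>x. \<Sum>k. a k * g k x)"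
  by (rule uniform_limit_theorem[OF _ uniform_limit_bounded_series[OF assms(1,2)]])
     (auto intro!: always_eventually continuous_intros assms(3))

lemma sums_integral_bounded_series:
  fixes g :: "nat \<Rightarrow> 'a::euclidean_space \<Rightarrow> real"
  assumes "summable (\<lambda>k. \<bar>a k\<bar>)" "\<And>k x. x \<in> cbox u v \<Longrightarrow> \<bar>g k x\<bar> \<le> 1"
    and "\<And>k. continuous_on (cbox u v) (g k)"
  shows "(\<lambda>k. a k * integral (cbox u v) (g k)) sums integral (cbox u v) (\<lambda>x. \<Sum>k. a k * g k x)"
proof -
  have cont: "continuous_on (cbox u v) (\<lambda>x. \<Sum>k<n. a k * g k x)" for n
    by (intro continuous_on_sum continuous_on_mult_left assms(3))
  obtain I J where I: "\<And>n. ((\<lambda>x. \<Sum>k<n. a k * g k x) has_integral I n) (cbox u v)"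
    and J: "((\<lambda>x. \<Sum>k. a k * g k x) has_integral J) (cbox u v)" and IJ: "I \<longlonglongrightarrow> J"
    using uniform_limit_integral_cbox[OF uniform_limit_bounded_series[OF assms(1,2)] cont] by auto
  have "I = (\<lambda>n. \<Sum>k<n. a k * integral (cbox u v) (g k))"
    unfolding integral_unique[OF I, symmetric]
    by (intro ext, subst integral_sum)
       (auto intro: integrable_continuous continuous_on_mult_left assms(3))
  with IJ J show ?thesis
    by (simp add: sums_def integral_unique)
qed

lemma has_integral_cos_affine:
  fixes a b w \<theta> :: real
  assumes "a \<le> b" "w \<noteq> 0"
  shows "((\<lambda>s. cos (\<theta> + w * s)) has_integral (sin (\<theta> + w * b) - sin (\<theta> + w * a)) / w) {a..b}"
proof -
  have "((\<lambda>s. sin (\<theta> + w * s) / w) has_real_derivative cos (\<theta> + w * s)) (at s within {a..b})" for s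
    using assms(2) by (auto intro!: derivative_eq_intros)
  then show ?thesis
    using fundamental_theorem_of_calculus[OF assms(1), of "\<lambda>s. sin (\<theta> + w * s) / w"]
    by (simp add: has_real_derivative_iff_has_vector_derivative diff_divide_distrib)
qed

lemma integral_half_open_unit_square:
  fixes f :: "real \<times> real \<Rightarrow> real"
  shows "integral ({0..<1} \<times> {0..<1}) f = integral (cbox (0, 0) (1, 1)) f"
proof (rule integral_spike_set)
  have "box (0, 0) (1, 1) \<subseteq> {0::real..<1} \<times> {0::real..<1}"
    and "{0::real..<1} \<times> {0::real..<1} \<subseteq> cbox (0, 0) (1, 1)"
    by (auto simp: mem_box cbox_Pair_eq Basis_prod_def)
  then show "negligible {x \<in> {0..<1} \<times> {0..<1} - cbox (0, 0) (1, 1). f x \<noteq> 0}"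
    and "negligible {x \<in> cbox (0, 0) (1, 1) - {0..<1} \<times> {0..<1}. f x \<noteq> 0}"
    by (auto intro: negligible_subset[OF negligible_frontier_interval])
qed

lemma cos_add_2pi_int: "cos (x + 2 * pi * of_int n) = cos x"
  by (simp add: cos_add)

lemma sin_add_2pi_int: "sin (x + 2 * pi * of_int n) = sin x"
  by (simp add: sin_add)

definition torus_wave :: "int \<Rightarrow> int \<Rightarrow> real \<times> real \<Rightarrow> real" where
  "torus_wave P Q z = cos (2 * pi * (of_int Q * snd z - of_int P * fst z))"

lemma abs_torus_wave_le_1: "\<bar>torus_wave P Q z\<bar> \<le> 1"
  by (simp add: torus_wave_def)

lemma continuous_on_torus_wave: "continuous_on S (torus_wave P Q)"
  unfolding torus_wave_def by (intro continuous_intros)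

lemma torus_wave_periodic:
  "torus_wave P Q (x + 1, y) = torus_wave P Q (x, y)"
  "torus_wave P Q (x, y + 1) = torus_wave P Q (x, y)"
proof -
  have "2 * pi * (of_int Q * y - of_int P * (x + 1)) =
      2 * pi * (of_int Q * y - of_int P * x) + 2 * pi * of_int (- P)"
    and "2 * pi * (of_int Q * (y + 1) - of_int P * x) =
      2 * pi * (of_int Q * y - of_int P * x) + 2 * pi * of_int Q"
    by (simp_all add: algebra_simps)
  then show "torus_wave P Q (x + 1, y) = torus_wave P Q (x, y)"
    and "torus_wave P Q (x, y + 1) = torus_wave P Q (x, y)"
    unfolding torus_wave_def by (simp_all only: fst_conv snd_conv cos_add_2pi_int)
qed

lemma torus_wave_flow:
  "torus_wave P Q (torus_flow c s z) =
     cos (2 * pi * (of_int Q * snd z - of_int P * fst z) + 2 * pi * (of_int Q * c - of_int P) * s)"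
proof -
  have "2 * pi * (of_int Q * frac (snd z + c * s) - of_int P * frac (fst z + s)) =
      2 * pi * (of_int Q * snd z - of_int P * fst z) + 2 * pi * (of_int Q * c - of_int P) * s
      + 2 * pi * of_int (P * \<lfloor>fst z + s\<rfloor> - Q * \<lfloor>snd z + c * s\<rfloor>)"
    by (simp add: frac_def algebra_simps)
  then show ?thesis
    unfolding torus_wave_def torus_flow_def by (simp only: fst_conv snd_conv cos_add_2pi_int)
qed

lemma integral_torus_wave:
  assumes "Q \<noteq> 0"
  shows "integral (cbox (0, 0) (1, 1)) (torus_wave P Q) = 0"
proof -
  have "integral {0..1} (\<lambda>y. torus_wave P Q (x, y)) = 0" for x
  proof -
    define \<theta> where "\<theta> = - 2 * pi * of_int P * x"
    have "torus_wave P Q (x, y) = cos (\<theta> + 2 * pi * of_int Q * y)" for y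
      by (simp add: torus_wave_def \<theta>_def algebra_simps)
    moreover have "sin (\<theta> + 2 * pi * of_int Q * 1) = sin (\<theta> + 2 * pi * of_int Q * 0)"
      using sin_add_2pi_int[of \<theta> Q] by simp
    ultimately show ?thesis
      using has_integral_cos_affine[of 0 1 "2 * pi * of_int Q" \<theta>] assms
      by (simp add: integral_unique)
  qed
  then show ?thesis
    by (simp add: integral_prod_continuous continuous_on_torus_wave)
qed

definition wave_series :: "(nat \<Rightarrow> real) \<Rightarrow> (nat \<Rightarrow> int) \<Rightarrow> (nat \<Rightarrow> int) \<Rightarrow> real \<times> real \<Rightarrow> real" where
  "wave_series a P Q z = (\<Sum>k. a k * torus_wave (P k) (Q k) z)"

lemma torus_continuous_wave_series:
  assumes "summable (\<lambda>k. \<bar>a k\<bar>)"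
  shows "torus_continuous (wave_series a P Q)"
  unfolding torus_continuous_def wave_series_def[abs_def]
  by (simp add: torus_wave_periodic continuous_on_bounded_series[OF assms]
      abs_torus_wave_le_1 continuous_on_torus_wave)

lemma integral_wave_series:
  assumes "summable (\<lambda>k. \<bar>a k\<bar>)" and "\<And>k. Q k \<noteq> 0"
  shows "integral ({0..<1} \<times> {0..<1}) (wave_series a P Q) = 0"
proof -
  have "(\<lambda>k. a k * integral (cbox (0, 0) (1, 1)) (torus_wave (P k) (Q k))) sums
      integral (cbox (0, 0) (1, 1)) (wave_series a P Q)"
    unfolding wave_series_def[abs_def]
    by (rule sums_integral_bounded_series[OF assms(1)])
       (simp_all add: abs_torus_wave_le_1 continuous_on_torus_wave)
  then have "integral (cbox (0, 0) (1, 1)) (wave_series a P Q) = 0"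
    by (simp add: integral_torus_wave assms(2) sums_iff)
  then show ?thesis
    by (simp add: integral_half_open_unit_square)
qed

definition cos_mean :: "real \<Rightarrow> real \<Rightarrow> real \<Rightarrow> real" where
  "cos_mean w \<theta> t = (sin (\<theta> + w * t) - sin \<theta>) / (w * t)"

lemma birkhoff_avg_wave_series:
  assumes a: "summable (\<lambda>k. \<bar>a k\<bar>)" and t: "0 < t" and PQ: "\<And>k. of_int (Q k) * c \<noteq> of_int (P k)"
  shows "(\<lambda>k. a k * cos_mean (2 * pi * (of_int (Q k) * c - of_int (P k)))
      (2 * pi * (of_int (Q k) * snd z - of_int (P k) * fst z)) t)
    sums birkhoff_avg c (wave_series a P Q) t z"
proof -
  define w where "w k = 2 * pi * (of_int (Q k) * c - of_int (P k))" for k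
  define \<theta> where "\<theta> k = 2 * pi * (of_int (Q k) * snd z - of_int (P k) * fst z)" for k
  have flow: "wave_series a P Q (torus_flow c s z) = (\<Sum>k. a k * cos (\<theta> k + w k * s))" for s
    by (simp add: wave_series_def torus_wave_flow w_def \<theta>_def mult.assoc)
  have "integral {0..t} (\<lambda>s. cos (\<theta> k + w k * s)) = t * cos_mean (w k) (\<theta> k) t" for k
    using has_integral_cos_affine[of 0 t "w k" "\<theta> k"] t PQ[of k]
    by (simp add: integral_unique w_def cos_mean_def)
  moreover have "(\<lambda>k. a k * integral {0..t} (\<lambda>s. cos (\<theta> k + w k * s))) sums
      integral {0..t} (\<lambda>s. \<Sum>k. a k * cos (\<theta> k + w k * s))"
    using sums_integral_bounded_series[OF a, of 0 t "\<lambda>k s. cos (\<theta> k + w k * s)"]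
    by (simp add: continuous_intros)
  ultimately have "(\<lambda>k. a k * (t * cos_mean (w k) (\<theta> k) t)) sums
      integral {0..t} (\<lambda>s. wave_series a P Q (torus_flow c s z))"
    by (simp add: flow)
  from sums_mult[OF this, of "1 / t"] show ?thesis
    using t by (simp add: birkhoff_avg_def w_def \<theta>_def)
qed

lemma abs_sin_diff_le:
  fixes a b :: real
  shows "\<bar>sin a - sin b\<bar> \<le> \<bar>a - b\<bar>"
proof -
  have "\<bar>sin a - sin b\<bar> = 2 * \<bar>sin ((a - b) / 2)\<bar> * \<bar>cos ((a + b) / 2)\<bar>"
    by (simp add: sin_diff_sin abs_mult)
  also have "\<dots> \<le> 2 * \<bar>(a - b) / 2\<bar> * 1"
    by (intro mult_mono abs_sin_x_le_abs_x) auto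
  finally show ?thesis by simp
qed

lemma abs_cos_mean_le_1: "\<bar>cos_mean w \<theta> t\<bar> \<le> 1"
  using abs_sin_diff_le[of "\<theta> + w * t" \<theta>]
  by (cases "w * t = 0") (simp_all add: cos_mean_def abs_divide divide_le_eq_1)

lemma abs_cos_mean_le:
  assumes "0 < w * t"
  shows "\<bar>cos_mean w \<theta> t\<bar> \<le> 2 / (w * t)"
proof -
  have "\<bar>sin (\<theta> + w * t) - sin \<theta>\<bar> \<le> 2"
    using abs_sin_le_one[of "\<theta> + w * t"] abs_sin_le_one[of \<theta>] by linarith
  with assms show ?thesis
    by (simp add: cos_mean_def abs_divide divide_right_mono)
qed

lemma cos_mean_large:
  assumes "w \<noteq> 0"
  shows "\<exists>t \<in> {pi / w, pi / (2 * w)}. 1 / 6 \<le> \<bar>cos_mean w \<theta> t\<bar>"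
proof -
  have w_pi: "w * (pi / w) = pi" and w_half_pi: "w * (pi / (2 * w)) = pi / 2"
    using assms by simp_all
  have "cos_mean w \<theta> (pi / w) = 2 / pi * (- sin \<theta>)"
    and "cos_mean w \<theta> (pi / (2 * w)) = 2 / pi * (cos \<theta> - sin \<theta>)"
    unfolding cos_mean_def w_pi w_half_pi by (simp_all add: sin_add)
  then have at_pi: "\<bar>cos_mean w \<theta> (pi / w)\<bar> = 2 / pi * \<bar>sin \<theta>\<bar>"
    and at_half_pi: "\<bar>cos_mean w \<theta> (pi / (2 * w))\<bar> = 2 / pi * \<bar>cos \<theta> - sin \<theta>\<bar>"
    by (simp_all only: abs_mult abs_minus_cancel) simp_all
  have "1 / 3 \<le> \<bar>sin \<theta>\<bar> \<or> 1 / 3 \<le> \<bar>cos \<theta> - sin \<theta>\<bar>"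
  proof (rule ccontr)
    assume "\<not> ?thesis"
    then have "\<bar>sin \<theta>\<bar> < 1 / 3" "\<bar>cos \<theta>\<bar> < 2 / 3" by linarith+
    then have "\<bar>sin \<theta>\<bar>\<^sup>2 < (1 / 3)\<^sup>2" "\<bar>cos \<theta>\<bar>\<^sup>2 < (2 / 3)\<^sup>2"
      by (intro power_strict_mono; simp)+
    then show False
      using sin_cos_squared_add[of \<theta>] by (simp add: power_divide)
  qed
  moreover have "1 / 6 \<le> 2 / pi * x" if "1 / 3 \<le> x" for x
    using pi_less_4 that by (simp add: field_simps)
  ultimately have "1 / 6 \<le> \<bar>cos_mean w \<theta> (pi / w)\<bar> \<or> 1 / 6 \<le> \<bar>cos_mean w \<theta> (pi / (2 * w))\<bar>"
    unfolding at_pi at_half_pi by blast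
  then show ?thesis
    by auto
qed

lemma abs_suminf_geometric_tail_le:
  fixes b :: "nat \<Rightarrow> real"
  assumes b: "\<And>n. \<bar>b n\<bar> \<le> 1"
  shows "\<bar>\<Sum>n. (1 / 10) ^ (n + Suc m) * b n\<bar> \<le> (1 / 10) ^ m / 9"
proof -
  have geom: "(\<lambda>n. (1 / 10 :: real) ^ (n + Suc m)) sums ((1 / 10) ^ m / 9)"
    using sums_mult[OF geometric_sums[of "1 / 10 :: real"], of "(1 / 10) ^ Suc m"]
    by (simp add: power_add mult.commute)
  have le: "\<bar>(1 / 10) ^ (n + Suc m) * b n\<bar> \<le> (1 / 10 :: real) ^ (n + Suc m)" for n
    using b[of n] by (simp add: abs_mult mult_left_le)
  have "summable (\<lambda>n. \<bar>(1 / 10) ^ (n + Suc m) * b n\<bar>)"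
    by (rule summable_comparison_test'[OF sums_summable[OF geom]])
       (simp only: real_norm_def abs_abs le)
  then have "\<bar>\<Sum>n. (1 / 10) ^ (n + Suc m) * b n\<bar> \<le> (\<Sum>n. \<bar>(1 / 10) ^ (n + Suc m) * b n\<bar>)"
    by (rule summable_rabs)
  also have "\<dots> \<le> (1 / 10) ^ m / 9"
    using suminf_le[OF le _ sums_summable[OF geom]] \<open>summable _\<close> geom by (simp add: sums_iff)
  finally show ?thesis .
qed

lemma abs_sum_lacunary_head_le:
  fixes w \<theta> :: "nat \<Rightarrow> real"
  assumes w: "\<And>k. 0 < w k" and ratio: "\<And>k. k < m \<Longrightarrow> w m \<le> (1 / 10) ^ m / (400 * (real m + 1)) * w k"
    and t: "pi / (2 * w m) \<le> t"
  shows "\<bar>\<Sum>k<m. (1 / 10) ^ k * cos_mean (w k) (\<theta> k) t\<bar> \<le> (1 / 10) ^ m / 100"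
proof -
  have "pi \<le> 2 * w m * t"
    using t w[of m] by (simp add: field_simps)
  then have wt: "1 \<le> 2 * w m * t"
    using pi_gt3 by linarith
  then have "0 < 2 * w m * t"
    by linarith
  then have t_pos: "0 < t"
    using w[of m] by (simp add: zero_less_mult_iff)
  have scale: "4 * (x / (400 * (real m + 1))) = x / (100 * (real m + 1))" for x :: real
    by (simp add: field_simps)
  have sum_le: "real m * (x / (100 * (real m + 1))) \<le> x / 100" if "0 \<le> x" for x :: real
    using that by (simp add: field_simps)
  have term_le: "\<bar>(1 / 10) ^ k * cos_mean (w k) (\<theta> k) t\<bar> \<le> (1 / 10) ^ m / (100 * (real m + 1))"
    if "k < m" for k
  proof -
    have "\<bar>(1 / 10) ^ k * cos_mean (w k) (\<theta> k) t\<bar> \<le> \<bar>cos_mean (w k) (\<theta> k) t\<bar>"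
      by (simp add: abs_mult mult_left_le_one_le power_le_one)
    also have "\<dots> \<le> 2 / (w k * t)"
      using abs_cos_mean_le[of "w k" t "\<theta> k"] w[of k] t_pos by simp
    also have "\<dots> \<le> 4 * (w m / w k)"
      using wt w[of k] t_pos by (simp add: field_simps)
    also have "w m / w k \<le> (1 / 10) ^ m / (400 * (real m + 1))"
      by (subst pos_divide_le_eq[OF w[of k]]) (rule ratio[OF that])
    also have "4 * ((1 / 10) ^ m / (400 * (real m + 1))) =
        (1 / 10 :: real) ^ m / (100 * (real m + 1))"
      by (rule scale)
    finally show ?thesis by simp
  qed
  have "\<bar>\<Sum>k<m. (1 / 10) ^ k * cos_mean (w k) (\<theta> k) t\<bar> \<le> (\<Sum>k<m. (1 / 10) ^ m / (100 * (real m + 1)))"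
    by (rule order_trans[OF sum_abs sum_mono]) (simp only: lessThan_iff term_le)
  also have "\<dots> = real m * ((1 / 10) ^ m / (100 * (real m + 1)))"
    by simp
  also have "\<dots> \<le> (1 / 10) ^ m / 100"
    using sum_le[of "(1 / 10) ^ m"] by simp
  finally show ?thesis .
qed

lemma lacunary_cos_mean_series_large:
  fixes w \<theta> :: "nat \<Rightarrow> real"
  assumes w: "\<And>k. 0 < w k" and ratio: "\<And>k. k < m \<Longrightarrow> w m \<le> (1 / 10) ^ m / (400 * (real m + 1)) * w k"
  shows "\<exists>t \<ge> pi / (2 * w m). (1 / 10) ^ m / 25 \<le> \<bar>\<Sum>k. (1 / 10) ^ k * cos_mean (w k) (\<theta> k) t\<bar>"
proof -
  obtain t where t: "t \<in> {pi / w m, pi / (2 * w m)}" and large: "1 / 6 \<le> \<bar>cos_mean (w m) (\<theta> m) t\<bar>"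
    using cos_mean_large[of "w m" "\<theta> m"] w[of m] by auto
  have "pi / (2 * w m) \<le> pi / w m"
    using w[of m] by (intro divide_left_mono) auto
  with t have t_ge: "pi / (2 * w m) \<le> t"
    by auto
  define f where "f k = (1 / 10) ^ k * cos_mean (w k) (\<theta> k) t" for k
  have "summable f"
    unfolding f_def
    by (rule summable_comparison_test'[OF summable_geometric[of "1 / 10 :: real"]])
       (simp_all add: abs_mult abs_cos_mean_le_1 mult_left_le)
  then have split: "(\<Sum>k. f k) = (\<Sum>n. f (n + Suc m)) + (\<Sum>k<m. f k) + f m"
    using suminf_split_initial_segment[of f "Suc m"] by simp
  have "\<bar>\<Sum>n. f (n + Suc m)\<bar> \<le> (1 / 10) ^ m / 9"
    unfolding f_def by (rule abs_suminf_geometric_tail_le) (rule abs_cos_mean_le_1)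
  moreover have "\<bar>\<Sum>k<m. f k\<bar> \<le> (1 / 10) ^ m / 100"
    unfolding f_def by (rule abs_sum_lacunary_head_le[where w = w, OF w ratio t_ge])
  moreover have "(1 / 10) ^ m / 6 \<le> \<bar>f m\<bar>"
    using mult_left_mono[OF large, of "(1 / 10) ^ m"] by (simp add: f_def abs_mult)
  ultimately have "(1 / 10) ^ m / 25 \<le> \<bar>\<Sum>k. f k\<bar>"
    unfolding split by linarith
  with t_ge show ?thesis
    unfolding f_def by blast
qed

lemma birkhoff_avg_lacunary_wave_series_large:
  fixes P Q :: "nat \<Rightarrow> int" and c :: real
  defines "d k \<equiv> of_int (Q k) * c - of_int (P k)"
  assumes d: "\<And>k. 0 < d k" and ratio: "\<And>k. k < m \<Longrightarrow> d m \<le> (1 / 10) ^ m / (400 * (real m + 1)) * d k"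
  shows "\<exists>t \<ge> 1 / (4 * d m).
    (1 / 10) ^ m / 25 \<le> \<bar>birkhoff_avg c (wave_series (\<lambda>k. (1 / 10) ^ k) P Q) t z\<bar>"
proof -
  define w where "w k = 2 * pi * d k" for k
  define \<theta> where "\<theta> k = 2 * pi * (of_int (Q k) * snd z - of_int (P k) * fst z)" for k
  have w: "0 < w k" for k
    using d[of k] by (simp add: w_def)
  have w_ratio: "w m \<le> (1 / 10) ^ m / (400 * (real m + 1)) * w k" if "k < m" for k
    using mult_left_mono[OF ratio[OF that], of "2 * pi"] by (simp add: w_def mult.left_commute)
  obtain t where t: "pi / (2 * w m) \<le> t"
    and large: "(1 / 10) ^ m / 25 \<le> \<bar>\<Sum>k. (1 / 10) ^ k * cos_mean (w k) (\<theta> k) t\<bar>"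
    using lacunary_cos_mean_series_large[of w m \<theta>, OF w w_ratio] by blast
  have t_ge: "1 / (4 * d m) \<le> t"
    using t d[of m] by (simp add: w_def)
  have "0 < pi / (2 * w m)"
    using w[of m] by simp
  with t have "0 < t"
    by linarith
  have PQ: "of_int (Q k) * c \<noteq> of_int (P k)" for k
    using d[of k] by (simp add: d_def)
  have "(\<lambda>k. (1 / 10) ^ k * cos_mean (w k) (\<theta> k) t)
      sums birkhoff_avg c (wave_series (\<lambda>k. (1 / 10) ^ k) P Q) t z"
    unfolding w_def \<theta>_def d_def
    by (rule birkhoff_avg_wave_series) (simp_all add: \<open>0 < t\<close> PQ)
  with t_ge large show ?thesis
    by (auto simp: sums_iff)
qed

lemma lacunary_subsequence:
  fixes d \<delta> \<epsilon> :: "nat \<Rightarrow> real"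
  assumes d: "d \<longlonglongrightarrow> 0" and pos: "eventually (\<lambda>j. 0 < d j \<and> G j) sequentially"
    and \<delta>: "\<And>m. 0 < \<delta> m" and \<epsilon>: "\<And>m. 0 < \<epsilon> m" "\<And>m. \<epsilon> m \<le> 1"
  obtains N where "\<And>m. 0 < d (N m)" "\<And>m. G (N m)" "\<And>m. d (N m) \<le> \<delta> m"
    and "\<And>k m. k < m \<Longrightarrow> d (N m) \<le> \<epsilon> m * d (N k)"
proof -
  define good where "good m j \<longleftrightarrow> 0 < d j \<and> G j \<and> d j \<le> \<delta> m" for m j
  have small: "\<exists>j. good m j \<and> d j \<le> B" if "0 < B" for m B
  proof -
    have "eventually (\<lambda>j. good m j \<and> d j \<le> B) sequentially"
      using pos order_tendstoD(2)[OF d \<delta>[of m]] order_tendstoD(2)[OF d that]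
      by eventually_elim (auto simp: good_def)
    then show ?thesis
      by (rule eventually_happens'[OF sequentially_bot])
  qed
  have "\<exists>N. \<forall>m. good m (N m) \<and> d (N (Suc m)) \<le> \<epsilon> (Suc m) * d (N m)"
  proof (rule dependent_nat_choice)
    show "\<exists>j. good 0 j"
      using small[of 1] by auto
  next
    fix j m
    assume "good m j"
    then have "0 < \<epsilon> (Suc m) * d j"
      using \<epsilon>(1) by (simp add: good_def)
    then show "\<exists>j'. good (Suc m) j' \<and> d j' \<le> \<epsilon> (Suc m) * d j"
      by (rule small)
  qed
  then obtain N where good: "\<And>m. good m (N m)" and step: "\<And>m. d (N (Suc m)) \<le> \<epsilon> (Suc m) * d (N m)"
    by blast
  have ratio: "d (N m) \<le> \<epsilon> m * d (N k)" if "k < m" for k m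
    using that
  proof (induction m)
    case (Suc m)
    have "d (N m) \<le> d (N k)"
    proof (cases "k = m")
      case False
      with Suc have "d (N m) \<le> \<epsilon> m * d (N k)"
        by simp
      also have "\<dots> \<le> d (N k)"
        using \<epsilon>(2)[of m] good[of k] by (simp add: good_def mult_left_le_one_le)
      finally show ?thesis .
    qed simp
    then have "\<epsilon> (Suc m) * d (N m) \<le> \<epsilon> (Suc m) * d (N k)"
      using \<epsilon>(1)[of "Suc m"] by simp
    with step[of m] show ?case
      by linarith
  qed simp
  show ?thesis
    using good ratio by (intro that) (auto simp: good_def)
qed

lemma lacunary_wave_series_large_averages:
  fixes p q :: "nat \<Rightarrow> int" and c :: real and T :: "nat \<Rightarrow> real"
  assumes "(\<lambda>j. of_int (q j) * c - of_int (p j)) \<longlonglongrightarrow> 0"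
    and "eventually (\<lambda>j. 0 < of_int (q j) * c - of_int (p j) \<and> q j \<noteq> 0) sequentially"
  obtains N where "\<And>m. q (N m) \<noteq> 0"
    and "\<And>m z. \<exists>t \<ge> T m. (1 / 10) ^ m / 25 \<le>
      \<bar>birkhoff_avg c (wave_series (\<lambda>k. (1 / 10) ^ k) (p \<circ> N) (q \<circ> N)) t z\<bar>"
proof -
  define d where "d j = of_int (q j) * c - of_int (p j)" for j
  obtain N where d_pos: "\<And>m. 0 < d (N m)" and q_nz: "\<And>m. q (N m) \<noteq> 0"
    and d_small: "\<And>m. d (N m) \<le> 1 / (4 * (\<bar>T m\<bar> + 1))"
    and ratio: "\<And>k m. k < m \<Longrightarrow> d (N m) \<le> (1 / 10) ^ m / (400 * (real m + 1)) * d (N k)"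
  proof (rule lacunary_subsequence[where \<delta> = "\<lambda>m. 1 / (4 * (\<bar>T m\<bar> + 1))"
        and \<epsilon> = "\<lambda>m. (1 / 10) ^ m / (400 * (real m + 1))"])
    show "d \<longlonglongrightarrow> 0" and "eventually (\<lambda>j. 0 < d j \<and> q j \<noteq> 0) sequentially"
      using assms by (simp_all add: d_def[abs_def])
    show "(1 / 10) ^ m / (400 * (real m + 1)) \<le> 1" for m :: nat
      using power_le_one[of "1 / 10 :: real" m] by (simp add: divide_le_eq_1)
  qed (blast intro: that | simp)+
  have "\<exists>t \<ge> T m. (1 / 10) ^ m / 25 \<le>
      \<bar>birkhoff_avg c (wave_series (\<lambda>k. (1 / 10) ^ k) (p \<circ> N) (q \<circ> N)) t z\<bar>" for m z
  proof -
    obtain t where t: "1 / (4 * d (N m)) \<le> t"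
      and large: "(1 / 10) ^ m / 25 \<le>
        \<bar>birkhoff_avg c (wave_series (\<lambda>k. (1 / 10) ^ k) (p \<circ> N) (q \<circ> N)) t z\<bar>"
      using birkhoff_avg_lacunary_wave_series_large[of "q \<circ> N" c "p \<circ> N" m z] d_pos ratio
      by (auto simp: d_def)
    have "\<bar>T m\<bar> + 1 \<le> 1 / (4 * d (N m))"
      using d_small[of m] d_pos[of m] by (simp add: field_simps)
    with t large show ?thesis
      by (intro exI[of _ t]) auto
  qed
  with q_nz that show ?thesis
    by blast
qed

lemma Limsup_at_top_eq_PInfty:
  fixes g :: "real \<Rightarrow> real"
  assumes "\<And>m :: nat. \<exists>t \<ge> real m. real m \<le> g t"
  shows "Limsup at_top (\<lambda>t. ereal (g t)) = \<infinity>"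
proof (rule ccontr)
  assume "Limsup at_top (\<lambda>t. ereal (g t)) \<noteq> \<infinity>"
  then obtain y :: real where "Limsup at_top (\<lambda>t. ereal (g t)) < ereal y"
    using less_PInf_Ex_of_nat by blast
  then have "eventually (\<lambda>t. g t < y) at_top"
    by (auto dest: Limsup_lessD)
  then obtain T where T: "\<And>t. T \<le> t \<Longrightarrow> g t < y"
    unfolding eventually_at_top_linorder by blast
  obtain m :: nat where "max T y < real m"
    using reals_Archimedean2 by blast
  moreover obtain t where "real m \<le> t" "real m \<le> g t"
    using assms by blast
  ultimately show False
    using T[of t] by linarith
qed

lemma approximation_defect_tendsto_0:
  fixes c :: real and p q :: "nat \<Rightarrow> int"
  assumes q_inf: "filterlim (\<lambda>n. real_of_int (q n)) at_top sequentially"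
    and pos: "\<forall>n. 0 < c - real_of_int (p n) / real_of_int (q n)"
    and lim: "(\<lambda>n. (real_of_int (q n))\<^sup>2 * (c - real_of_int (p n) / real_of_int (q n))) \<longlonglongrightarrow> 0"
  shows "(\<lambda>n. of_int (q n) * c - of_int (p n)) \<longlonglongrightarrow> 0"
    and "eventually (\<lambda>n. 0 < of_int (q n) * c - of_int (p n) \<and> q n \<noteq> 0) sequentially"
proof -
  have q_ge_1: "eventually (\<lambda>n. 1 \<le> real_of_int (q n)) sequentially"
    using q_inf unfolding filterlim_at_top by blast
  have defect: "of_int (q n) * c - of_int (p n) =
      (real_of_int (q n))\<^sup>2 * (c - real_of_int (p n) / real_of_int (q n))
      * inverse (real_of_int (q n))"
    if "1 \<le> real_of_int (q n)" for n
    using that by (simp add: field_simps power2_eq_square)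
  have "(\<lambda>n. (real_of_int (q n))\<^sup>2 * (c - real_of_int (p n) / real_of_int (q n))
      * inverse (real_of_int (q n))) \<longlonglongrightarrow> 0"
    using tendsto_mult[OF lim tendsto_inverse_0_at_top[OF q_inf]] by simp
  then show "(\<lambda>n. of_int (q n) * c - of_int (p n)) \<longlonglongrightarrow> 0"
    by (rule Lim_transform_eventually) (use q_ge_1 defect in \<open>auto elim: eventually_mono\<close>)
  show "eventually (\<lambda>n. 0 < of_int (q n) * c - of_int (p n) \<and> q n \<noteq> 0) sequentially"
    using q_ge_1
  proof eventually_elim
    case (elim n)
    then show ?case
      using pos defect[OF elim] by (simp add: zero_less_mult_iff)
  qed
qed

theorem theorem4:
  fixes c :: real and p q :: "nat \<Rightarrow> int" and \<phi> :: "real \<Rightarrow> real"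
  assumes irr: "c \<notin> \<rat>"
    and q_inf: "filterlim (\<lambda>n. real_of_int (q n)) at_top sequentially"
    and pos: "\<forall>n. 0 < c - real_of_int (p n) / real_of_int (q n)"
    and lim: "(\<lambda>n. (real_of_int (q n))\<^sup>2 * (c - real_of_int (p n) / real_of_int (q n))) \<longlonglongrightarrow> 0"
    and phi_pos: "\<forall>t>0. \<phi> t > 0"
    and phi_lim: "(\<phi> \<longlongrightarrow> 0) at_top"
  shows "\<exists>f. torus_continuous f \<and> integral ({0..<1} \<times> {0..<1}) f = 0 \<and>
    (AE z in lborel. z \<in> {0..<1} \<times> {0..<1} \<longrightarrow>
       Limsup at_top (\<lambda>t. ereal (\<bar>birkhoff_avg c f t z\<bar> / \<phi> t)) = \<infinity>)"
proof -
  have "\<forall>m :: nat. \<exists>T. \<forall>t \<ge> T. \<phi> t < (1 / 10) ^ m / (25 * (real m + 1))"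
    using order_tendstoD(2)[OF phi_lim] by (simp add: eventually_at_top_linorder)
  then obtain T where T: "\<And>m t. T m \<le> t \<Longrightarrow> \<phi> t < (1 / 10) ^ m / (25 * (real m + 1))"
    by metis
  obtain N where q_nz: "\<And>m. q (N m) \<noteq> 0"
    and large: "\<And>m z. \<exists>t \<ge> max (T m) (real m + 1). (1 / 10) ^ m / 25 \<le>
      \<bar>birkhoff_avg c (wave_series (\<lambda>k. (1 / 10) ^ k) (p \<circ> N) (q \<circ> N)) t z\<bar>"
    using approximation_defect_tendsto_0[OF q_inf pos lim]
    by (rule lacunary_wave_series_large_averages[where T = "\<lambda>m. max (T m) (real m + 1)"])
       (rule that; assumption)
  define f where "f = wave_series (\<lambda>k. (1 / 10) ^ k) (p \<circ> N) (q \<circ> N)"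
  have rescale: "real m \<le> a / x" if "y / 25 \<le> a" "0 < x" "x < y / (25 * (real m + 1))" for m a x y
    using that by (simp add: field_simps)
  have "\<exists>t \<ge> real m. real m \<le> \<bar>birkhoff_avg c f t z\<bar> / \<phi> t" for m z
  proof -
    obtain t where t: "max (T m) (real m + 1) \<le> t" and "(1 / 10) ^ m / 25 \<le> \<bar>birkhoff_avg c f t z\<bar>"
      using large[of m z] by (auto simp: f_def)
    moreover have "0 < \<phi> t" and "\<phi> t < (1 / 10) ^ m / (25 * (real m + 1))"
      using t T[of m t] phi_pos by auto
    ultimately show ?thesis
      by (intro exI[of _ t]) (auto intro: rescale)
  qed
  then show ?thesis
    by (intro exI[of _ f] conjI AE_I2 impI Limsup_at_top_eq_PInfty)
       (simp_all add: f_def torus_continuous_wave_series integral_wave_series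
         summable_geometric q_nz)
qed

end
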